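(* Every vertex $v\in V$ belongs to at most $O(D\log n)$ of the sets $\mathsf{LDS}(x,y)$, taken over all independent pairs $(x,y)$.
   Context: $G=(V,E)$ is a connected $n$-vertex graph of diameter $D$ with no cut vertex, $T$ a BFS tree rooted at $s$, $\pi(u,v)$ the $T$-path, $T_x$ the subtree at $x$, $V_x=V(T_x)\setminus\{x\}$. The heavy child of a non-leaf vertex is the child with the largest subtree (ties broken consistently); other children are light. $\mathsf{LD}(x)$, the light descendants of $x$, is the union of $V(T_{x'})$ over light children $x'$ of $x$. $\mathcal{C}_x$ is the set of connected components of $G[V_x]$ and $C_{x,v}$ the one containing $v$. For each $C\in\mathcal{C}_x$ a fixed edge $(u_C,v_C)\in E$ with $v_C\in C$, $u_C\notin V(T_x)$ is chosen and $\pi_x(s,C)=\pi(s,u_C)\circ(u_C,v_C)$. A pair $x,y$ is independent if neither is a $T$-ancestor of the other. For an independent pair, $\mathsf{LDS}(x,y)=\{v\in\mathsf{LD}(x): y\in\pi_x(s,C_{x,v})\}$. *)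

theory Defs
  imports Complex_Main
begin

definition simple_graph :: "'a set \<Rightarrow> ('a \<times> 'a) set \<Rightarrow> bool" where
  "simple_graph V E \<longleftrightarrow> finite V \<and> E \<subseteq> V \<times> V \<and> sym E \<and> (\<forall>x. (x, x) \<notin> E)"

definition conn_in :: "('a \<times> 'a) set \<Rightarrow> 'a set \<Rightarrow> bool" where
  "conn_in E S \<longleftrightarrow> (\<forall>x\<in>S. \<forall>y\<in>S. (x, y) \<in> (E \<inter> S \<times> S)\<^sup>*)"

definition no_cut_vertex :: "'a set \<Rightarrow> ('a \<times> 'a) set \<Rightarrow> bool" where
  "no_cut_vertex V E \<longleftrightarrow> (\<forall>w\<in>V. conn_in E (V - {w}))"

definition gdist :: "('a \<times> 'a) set \<Rightarrow> 'a \<Rightarrow> 'a \<Rightarrow> nat" where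
  "gdist E x y = (LEAST k. (x, y) \<in> E ^^ k)"

definition diam :: "'a set \<Rightarrow> ('a \<times> 'a) set \<Rightarrow> nat" where
  "diam V E = Max {gdist E x y | x y. x \<in> V \<and> y \<in> V}"

text \<open>Rooted spanning tree given by a parent function par (par s is irrelevant).
  x is a T-ancestor of y (reflexively) if x is reached from y by following parents,
  never stepping beyond the root s.\<close>
definition anc :: "('a \<Rightarrow> 'a) \<Rightarrow> 'a \<Rightarrow> 'a \<Rightarrow> 'a \<Rightarrow> bool" where
  "anc par s x y \<longleftrightarrow> (\<exists>k. (par ^^ k) y = x \<and> (\<forall>i<k. (par ^^ i) y \<noteq> s))"

definition bfs_tree :: "'a set \<Rightarrow> ('a \<times> 'a) set \<Rightarrow> 'a \<Rightarrow> ('a \<Rightarrow> 'a) \<Rightarrow> bool" where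
  "bfs_tree V E s par \<longleftrightarrow> s \<in> V \<and>
     (\<forall>v\<in>V - {s}. par v \<in> V \<and> (par v, v) \<in> E \<and> gdist E s v = gdist E s (par v) + 1)"

definition subtree :: "'a set \<Rightarrow> ('a \<Rightarrow> 'a) \<Rightarrow> 'a \<Rightarrow> 'a \<Rightarrow> 'a set" where
  "subtree V par s x = {y \<in> V. anc par s x y}"

definition children :: "'a set \<Rightarrow> ('a \<Rightarrow> 'a) \<Rightarrow> 'a \<Rightarrow> 'a \<Rightarrow> 'a set" where
  "children V par s x = {c \<in> V - {s}. par c = x}"

definition heavy_choice :: "'a set \<Rightarrow> ('a \<Rightarrow> 'a) \<Rightarrow> 'a \<Rightarrow> ('a \<Rightarrow> 'a) \<Rightarrow> bool" where
  "heavy_choice V par s h \<longleftrightarrow> (\<forall>x\<in>V. children V par s x \<noteq> {} \<longrightarrow>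
      h x \<in> children V par s x \<and>
      (\<forall>c\<in>children V par s x. card (subtree V par s c) \<le> card (subtree V par s (h x))))"

definition LD :: "'a set \<Rightarrow> ('a \<Rightarrow> 'a) \<Rightarrow> 'a \<Rightarrow> ('a \<Rightarrow> 'a) \<Rightarrow> 'a \<Rightarrow> 'a set" where
  "LD V par s h x = (\<Union>c\<in>children V par s x - {h x}. subtree V par s c)"

definition Vx :: "'a set \<Rightarrow> ('a \<Rightarrow> 'a) \<Rightarrow> 'a \<Rightarrow> 'a \<Rightarrow> 'a set" where
  "Vx V par s x = subtree V par s x - {x}"

definition comp :: "'a set \<Rightarrow> ('a \<times> 'a) set \<Rightarrow> ('a \<Rightarrow> 'a) \<Rightarrow> 'a \<Rightarrow> 'a \<Rightarrow> 'a \<Rightarrow> 'a set" where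
  "comp V E par s x v =
     {w \<in> Vx V par s x. (v, w) \<in> (E \<inter> Vx V par s x \<times> Vx V par s x)\<^sup>*}"

definition comps :: "'a set \<Rightarrow> ('a \<times> 'a) set \<Rightarrow> ('a \<Rightarrow> 'a) \<Rightarrow> 'a \<Rightarrow> 'a \<Rightarrow> 'a set set" where
  "comps V E par s x = comp V E par s x ` Vx V par s x"

text \<open>Fixed choice of edges (u_C, v_C) with v_C in C and u_C outside V(T_x),
  for every x other than the root (for x = s no such edge can exist).\<close>
definition edge_choice :: "'a set \<Rightarrow> ('a \<times> 'a) set \<Rightarrow> 'a \<Rightarrow> ('a \<Rightarrow> 'a)
    \<Rightarrow> ('a \<Rightarrow> 'a set \<Rightarrow> 'a) \<Rightarrow> ('a \<Rightarrow> 'a set \<Rightarrow> 'a) \<Rightarrow> bool" where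
  "edge_choice V E s par uC vC \<longleftrightarrow> (\<forall>x\<in>V - {s}. \<forall>C\<in>comps V E par s x.
      (uC x C, vC x C) \<in> E \<and> vC x C \<in> C \<and> uC x C \<notin> subtree V par s x)"

text \<open>Vertex set of the path pi_x(s,C) = pi(s,u_C) followed by the edge (u_C,v_C).\<close>
definition pi_x :: "('a \<Rightarrow> 'a) \<Rightarrow> 'a \<Rightarrow> ('a \<Rightarrow> 'a set \<Rightarrow> 'a) \<Rightarrow> ('a \<Rightarrow> 'a set \<Rightarrow> 'a)
    \<Rightarrow> 'a \<Rightarrow> 'a set \<Rightarrow> 'a set" where
  "pi_x par s uC vC x C = {z. anc par s z (uC x C)} \<union> {vC x C}"

definition indep :: "('a \<Rightarrow> 'a) \<Rightarrow> 'a \<Rightarrow> 'a \<Rightarrow> 'a \<Rightarrow> bool" where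
  "indep par s x y \<longleftrightarrow> \<not> anc par s x y \<and> \<not> anc par s y x"

definition LDS :: "'a set \<Rightarrow> ('a \<times> 'a) set \<Rightarrow> 'a \<Rightarrow> ('a \<Rightarrow> 'a) \<Rightarrow> ('a \<Rightarrow> 'a)
    \<Rightarrow> ('a \<Rightarrow> 'a set \<Rightarrow> 'a) \<Rightarrow> ('a \<Rightarrow> 'a set \<Rightarrow> 'a) \<Rightarrow> 'a \<Rightarrow> 'a \<Rightarrow> 'a set" where
  "LDS V E s par h uC vC x y =
     {v \<in> LD V par s h x. y \<in> pi_x par s uC vC x (comp V E par s x v)}"

end

theory Submission
  imports Defs
begin

text \<open>If v \<in> LDS(x,y), then v lies in the subtree of a light child c of x, so c is an
  ancestor of v and x is its parent. Passing from a light child to its parent at least doubles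
  the subtree size, so at most log2 n ancestors of v are light children, and v admits at most
  log2 n such x. For each of them y lies on pi_x(s, C_{x,v}), a tree path from the root of length
  at most D followed by one edge, so there are at most D + 2 choices of y. Hence there are at
  most log2 n (D + 2) \<le> (3 / ln 2) D ln n pairs.\<close>

locale bfs_graph =
  fixes V :: "'a set" and E :: "('a \<times> 'a) set" and s :: 'a and par :: "'a \<Rightarrow> 'a"
  assumes simple: "simple_graph V E" and bfs: "bfs_tree V E s par"
begin

abbreviation depth :: "'a \<Rightarrow> nat" where
  "depth v \<equiv> gdist E s v"

lemma root_in_V: "s \<in> V"
  using bfs unfolding bfs_tree_def by blast

lemma finite_V: "finite V"
  using simple unfolding simple_graph_def by blast

lemma par_in_V: "v \<in> V \<Longrightarrow> v \<noteq> s \<Longrightarrow> par v \<in> V"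
  using bfs unfolding bfs_tree_def by blast

lemma depth_par: "v \<in> V \<Longrightarrow> v \<noteq> s \<Longrightarrow> depth v = Suc (depth (par v))"
  using bfs unfolding bfs_tree_def by simp

lemma depth_root: "depth s = 0"
  unfolding gdist_def by (rule Least_eq_0) simp

lemma depth_le_diam: "v \<in> V \<Longrightarrow> depth v \<le> diam V E"
  unfolding diam_def
  using finite_V root_in_V finite_image_set2[of "\<lambda>x. x \<in> V" "\<lambda>y. y \<in> V" "gdist E"]
  by (intro Max_ge) auto

lemma diam_pos: "2 \<le> card V \<Longrightarrow> 1 \<le> diam V E"
proof -
  assume "2 \<le> card V"
  then obtain v where "v \<in> V" "v \<noteq> s"
    by (metis card_le_Suc0_iff_eq finite_V not_less_eq_eq numeral_2_eq_2)
  then have "1 \<le> depth v"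
    using depth_par by simp
  then show ?thesis
    using depth_le_diam[OF \<open>v \<in> V\<close>] by linarith
qed

lemma iterate_par:
  assumes "y \<in> V" "\<forall>j<i. (par ^^ j) y \<noteq> s"
  shows "(par ^^ i) y \<in> V \<and> depth ((par ^^ i) y) + i = depth y"
  using assms(2)
proof (induction i)
  case (Suc i)
  then have "(par ^^ i) y \<in> V" "depth ((par ^^ i) y) + i = depth y" "(par ^^ i) y \<noteq> s"
    by auto
  then show ?case using par_in_V depth_par by simp
qed (use assms(1) in simp)

lemma iterate_par_ne_root: "y \<in> V \<Longrightarrow> j < depth y \<Longrightarrow> (par ^^ j) y \<noteq> s"
proof (induction j rule: less_induct)
  case (less j)
  then have "depth ((par ^^ j) y) + j = depth y"
    using iterate_par by (meson order.strict_trans)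
  then show ?case using less.prems(2) depth_root by auto
qed

lemma ancestorE:
  assumes "y \<in> V" "anc par s z y"
  obtains m where "z = (par ^^ m) y" "z \<in> V" "depth z + m = depth y"
  using assms iterate_par unfolding anc_def by metis

lemma root_ancestor: "y \<in> V \<Longrightarrow> anc par s s y"
proof -
  assume y: "y \<in> V"
  have below_root: "\<forall>j<depth y. (par ^^ j) y \<noteq> s"
    using iterate_par_ne_root[OF y] by blast
  then have "(par ^^ depth y) y \<in> V" "depth ((par ^^ depth y) y) = 0"
    using iterate_par[OF y below_root] by auto
  then have "(par ^^ depth y) y = s"
    using depth_par by fastforce
  then show ?thesis
    unfolding anc_def using below_root by blast
qed

lemma ancestor_depth_le: "y \<in> V \<Longrightarrow> anc par s z y \<Longrightarrow> depth z \<le> depth y"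
  by (metis ancestorE le_add1)

lemma ancestor_unique_at_depth:
  "y \<in> V \<Longrightarrow> anc par s z y \<Longrightarrow> anc par s z' y \<Longrightarrow> depth z = depth z' \<Longrightarrow> z = z'"
  by (metis ancestorE add_left_cancel)

lemma card_ancestors_le:
  assumes "y \<in> V"
  shows "finite {z. anc par s z y} \<and> card {z. anc par s z y} \<le> depth y + 1"
proof -
  have sub: "{z. anc par s z y} \<subseteq> (\<lambda>m. (par ^^ m) y) ` {..depth y}"
  proof
    fix z assume "z \<in> {z. anc par s z y}"
    then obtain m where "z = (par ^^ m) y" "depth z + m = depth y"
      using ancestorE[OF assms] by blast
    then show "z \<in> (\<lambda>m. (par ^^ m) y) ` {..depth y}"
      by auto
  qed
  have "card {z. anc par s z y} \<le> card ((\<lambda>m. (par ^^ m) y) ` {..depth y})"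
    by (rule card_mono[OF _ sub]) simp
  also have "\<dots> \<le> depth y + 1"
    using card_image_le[of "{..depth y}"] by simp
  finally show ?thesis
    using finite_subset[OF sub] by simp
qed

lemma subtree_subset_par: "c \<noteq> s \<Longrightarrow> subtree V par s c \<subseteq> subtree V par s (par c)"
proof
  fix y assume c: "c \<noteq> s" and "y \<in> subtree V par s c"
  then obtain k where y: "y \<in> V" and k: "(par ^^ k) y = c" "\<forall>i<k. (par ^^ i) y \<noteq> s"
    unfolding subtree_def anc_def by blast
  then have "(par ^^ Suc k) y = par c" "\<forall>i<Suc k. (par ^^ i) y \<noteq> s"
    using c less_Suc_eq by auto
  then show "y \<in> subtree V par s (par c)"
    unfolding subtree_def anc_def using y by blast
qed

lemma finite_subtree: "finite (subtree V par s x)"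
  using finite_V unfolding subtree_def by simp

lemma sibling_subtrees_disjoint:
  assumes "c \<in> children V par s x" "c' \<in> children V par s x" "c \<noteq> c'"
  shows "subtree V par s c \<inter> subtree V par s c' = {}"
proof -
  have "depth c = depth c'"
    using assms(1,2) depth_par unfolding children_def by force
  then show ?thesis
    using ancestor_unique_at_depth assms(3) unfolding subtree_def by blast
qed

lemma LD_elim:
  assumes "v \<in> LD V par s h x"
  obtains c where "c \<in> V" "c \<noteq> s" "par c = x" "c \<noteq> h x" "v \<in> V" "anc par s c v"
  using assms unfolding LD_def children_def subtree_def by blast

lemma LD_subset_Vx: "LD V par s h x \<subseteq> Vx V par s x"
proof
  fix v assume "v \<in> LD V par s h x"
  then obtain c where c: "c \<in> V" "c \<noteq> s" "par c = x" "v \<in> V" "anc par s c v"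
    by (rule LD_elim)
  then have "v \<in> subtree V par s x"
    using subtree_subset_par unfolding subtree_def by blast
  moreover have "v \<noteq> x"
    using ancestor_depth_le[OF c(4,5)] depth_par[OF c(1,2)] c(3) by auto
  ultimately show "v \<in> Vx V par s x"
    unfolding Vx_def by simp
qed

lemma card_pi_x_le:
  assumes "edge_choice V E s par uC vC" "x \<in> V" "x \<noteq> s" "v \<in> Vx V par s x"
  defines "C \<equiv> comp V E par s x v"
  shows "finite (pi_x par s uC vC x C) \<and> card (pi_x par s uC vC x C) \<le> diam V E + 2"
proof -
  have "C \<in> comps V E par s x"
    unfolding C_def comps_def using assms(4) by simp
  then have "(uC x C, vC x C) \<in> E"
    using assms(1-3) unfolding edge_choice_def by blast
  then have u: "uC x C \<in> V"
    using simple unfolding simple_graph_def by blast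
  have ancestors: "finite {z. anc par s z (uC x C)}"
    "card {z. anc par s z (uC x C)} \<le> depth (uC x C) + 1"
    using card_ancestors_le[OF u] by auto
  have "card (pi_x par s uC vC x C) \<le> card {z. anc par s z (uC x C)} + card {vC x C}"
    unfolding pi_x_def by (rule card_Un_le)
  also have "\<dots> \<le> depth (uC x C) + 2"
    using ancestors(2) by simp
  also have "\<dots> \<le> diam V E + 2"
    using depth_le_diam[OF u] by simp
  finally show ?thesis
    using ancestors(1) unfolding pi_x_def by simp
qed

lemma card_LDS_pairs_le:
  assumes "edge_choice V E s par uC vC" "v \<in> V"
  shows "card {(x, y). x \<in> V \<and> y \<in> V \<and> indep par s x y \<and> v \<in> LDS V E s par h uC vC x y}
    \<le> card {x. v \<in> LD V par s h x} * (diam V E + 2)"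
proof -
  define X where "X = {x. v \<in> LD V par s h x} - {s}"
  define Y where "Y x = pi_x par s uC vC x (comp V E par s x v)" for x
  have X_V: "X \<subseteq> V"
  proof
    fix x assume "x \<in> X"
    then obtain c where "c \<in> V" "c \<noteq> s" "par c = x"
      unfolding X_def by (auto elim: LD_elim)
    then show "x \<in> V"
      using par_in_V by blast
  qed
  then have "finite X"
    using finite_V finite_subset by blast
  have Y: "finite (Y x) \<and> card (Y x) \<le> diam V E + 2" if "x \<in> X" for x
    using card_pi_x_le[OF assms(1)] LD_subset_Vx X_V that unfolding X_def Y_def by blast
  have "{(x, y). x \<in> V \<and> y \<in> V \<and> indep par s x y \<and> v \<in> LDS V E s par h uC vC x y}
      \<subseteq> Sigma X Y"
    using root_ancestor unfolding X_def Y_def LDS_def indep_def by auto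
  then have "card {(x, y). x \<in> V \<and> y \<in> V \<and> indep par s x y \<and> v \<in> LDS V E s par h uC vC x y}
      \<le> card (Sigma X Y)"
    using \<open>finite X\<close> Y by (intro card_mono) auto
  also have "\<dots> = (\<Sum>x\<in>X. card (Y x))"
    using \<open>finite X\<close> Y by simp
  also have "\<dots> \<le> card X * (diam V E + 2)"
    using Y by (intro sum_bounded_above[of X "\<lambda>x. card (Y x)", simplified]) blast
  also have "\<dots> \<le> card {x. v \<in> LD V par s h x} * (diam V E + 2)"
    unfolding X_def by (intro mult_right_mono card_Diff1_le) simp
  finally show ?thesis .
qed

end

locale heavy_light = bfs_graph +
  fixes h :: "'a \<Rightarrow> 'a"
  assumes heavy: "heavy_choice V par s h"
begin

lemma light_child_subtree_half:
  assumes "c \<in> V" "c \<noteq> s" "c \<noteq> h (par c)"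
  shows "2 * card (subtree V par s c) \<le> card (subtree V par s (par c))"
proof -
  let ?x = "par c"
  have c: "c \<in> children V par s ?x"
    unfolding children_def using assms(1,2) by simp
  then have hc: "h ?x \<in> children V par s ?x"
    and bigger: "card (subtree V par s c) \<le> card (subtree V par s (h ?x))"
    using heavy par_in_V[OF assms(1,2)] unfolding heavy_choice_def by blast+
  have "2 * card (subtree V par s c) \<le> card (subtree V par s c) + card (subtree V par s (h ?x))"
    using bigger by simp
  also have "\<dots> = card (subtree V par s c \<union> subtree V par s (h ?x))"
    using sibling_subtrees_disjoint[OF c hc] assms(3)
    by (intro card_Un_disjoint[symmetric] finite_subtree) blast
  also have "\<dots> \<le> card (subtree V par s ?x)"
    using subtree_subset_par[of c] subtree_subset_par[of "h ?x"] hc assms(2)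
    unfolding children_def by (intro card_mono finite_subtree) auto
  finally show ?thesis .
qed

lemma subtree_card_along_path:
  assumes "v \<in> V" "k \<le> depth v"
  shows "2 ^ card {j. j < k \<and> (par ^^ j) v \<noteq> h (par ((par ^^ j) v))}
    \<le> card (subtree V par s ((par ^^ k) v))"
  using assms(2)
proof (induction k)
  case 0
  have "v \<in> subtree V par s v"
    unfolding subtree_def anc_def using assms(1) by (auto intro: exI[of _ 0])
  then show ?case
    using finite_subtree by (simp add: Suc_le_eq card_gt_0_iff) blast
next
  case (Suc k)
  let ?a = "(par ^^ k) v"
  let ?light = "\<lambda>j. (par ^^ j) v \<noteq> h (par ((par ^^ j) v))"
  have a: "?a \<in> V" "?a \<noteq> s"
    using iterate_par[OF assms(1)] iterate_par_ne_root[OF assms(1)] Suc.prems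
    by (metis Suc_le_lessD order.strict_trans)+
  have IH: "2 ^ card {j. j < k \<and> ?light j} \<le> card (subtree V par s ?a)"
    using Suc by simp
  show ?case
  proof (cases "?light k")
    case True
    have "{j. j < Suc k \<and> ?light j} = insert k {j. j < k \<and> ?light j}"
      using True less_Suc_eq by auto
    then show ?thesis
      using IH light_child_subtree_half[OF a True] by simp
  next
    case False
    have "{j. j < Suc k \<and> ?light j} = {j. j < k \<and> ?light j}"
      using False less_Suc_eq by auto
    then show ?thesis
      using IH card_mono[OF finite_subtree subtree_subset_par[OF a(2)]] by simp
  qed
qed

lemma two_power_card_LD_ancestors:
  assumes "v \<in> V"
  shows "2 ^ card {x. v \<in> LD V par s h x} \<le> card V"
proof -
  define J where "J = {j. j < depth v \<and> (par ^^ j) v \<noteq> h (par ((par ^^ j) v))}"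
  have "{x. v \<in> LD V par s h x} \<subseteq> (\<lambda>j. par ((par ^^ j) v)) ` J"
  proof
    fix x assume "x \<in> {x. v \<in> LD V par s h x}"
    then obtain c where c: "c \<in> V" "c \<noteq> s" "par c = x" "c \<noteq> h x" "anc par s c v"
      by (auto elim: LD_elim)
    then obtain m where m: "c = (par ^^ m) v" "depth c + m = depth v"
      using ancestorE[OF assms] by metis
    then have "m < depth v"
      using depth_par[OF c(1,2)] by simp
    then show "x \<in> (\<lambda>j. par ((par ^^ j) v)) ` J"
      unfolding J_def using c m by auto
  qed
  moreover have "finite J"
    unfolding J_def by simp
  ultimately have "card {x. v \<in> LD V par s h x} \<le> card ((\<lambda>j. par ((par ^^ j) v)) ` J)"
    by (intro card_mono) auto
  also have "\<dots> \<le> card J"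
    by (rule card_image_le[OF \<open>finite J\<close>])
  finally have "2 ^ card {x. v \<in> LD V par s h x} \<le> (2::nat) ^ card J"
    by simp
  also have "\<dots> \<le> card (subtree V par s ((par ^^ depth v) v))"
    unfolding J_def by (rule subtree_card_along_path[OF assms order.refl])
  also have "\<dots> \<le> card V"
    using finite_V by (intro card_mono) (auto simp: subtree_def)
  finally show ?thesis .
qed

end

lemma mult_le_ln_bound:
  fixes L D n :: nat
  assumes "2 ^ L \<le> n" "2 \<le> n \<Longrightarrow> 1 \<le> D"
  shows "real (L * (D + 2)) \<le> 3 / ln 2 * real D * ln (real n)"
proof -
  have n: "1 \<le> n"
    using le_trans[OF one_le_power[of "2::nat" L] assms(1)] by simp
  show ?thesis
  proof (cases "L = 0")
    case True
    then show ?thesis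
      using n by simp
  next
    case False
    then have D: "1 \<le> D"
      using assms le_trans[OF self_le_power[of "2::nat" L]] by simp
    have pow: "(2::real) ^ L \<le> real n"
      using assms(1) by (metis of_nat_le_iff of_nat_numeral of_nat_power)
    have "real L * ln 2 = ln (2 ^ L)"
      by (simp add: ln_realpow)
    also have "\<dots> \<le> ln (real n)"
      using pow n by (subst ln_le_cancel_iff) auto
    finally have L: "real L * ln 2 \<le> ln (real n)" .
    have "L * (D + 2) \<le> L * (3 * D)"
      using D by (intro mult_left_mono) auto
    then have "real (L * (D + 2)) \<le> 3 * real D * real L"
      using of_nat_mono[where 'a=real] by fastforce
    also have "\<dots> = 3 / ln 2 * real D * (real L * ln 2)"
      by simp
    also have "\<dots> \<le> 3 / ln 2 * real D * ln (real n)"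
      using L by (intro mult_left_mono) auto
    finally show ?thesis .
  qed
qed

theorem mainTheorem7:
  shows "\<exists>c::real. \<forall>(V::nat set) E s par h uC vC.
     simple_graph V E \<and> conn_in E V \<and> no_cut_vertex V E \<and> bfs_tree V E s par \<and>
     heavy_choice V par s h \<and> edge_choice V E s par uC vC \<longrightarrow>
     (\<forall>v\<in>V. real (card {(x, y). x \<in> V \<and> y \<in> V \<and> indep par s x y \<and>
                                  v \<in> LDS V E s par h uC vC x y})
             \<le> c * real (diam V E) * ln (real (card V)))"
proof (intro exI[of _ "3 / ln 2"] allI impI ballI)
  fix V :: "nat set" and E s par h uC vC v
  assume A: "simple_graph V E \<and> conn_in E V \<and> no_cut_vertex V E \<and> bfs_tree V E s par \<and>
     heavy_choice V par s h \<and> edge_choice V E s par uC vC" and v: "v \<in> V"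
  interpret heavy_light V E s par h
    using A by unfold_locales auto
  let ?pairs = "{(x, y). x \<in> V \<and> y \<in> V \<and> indep par s x y \<and> v \<in> LDS V E s par h uC vC x y}"
  let ?L = "card {x. v \<in> LD V par s h x}"
  have "card ?pairs \<le> ?L * (diam V E + 2)"
    using card_LDS_pairs_le A v by blast
  moreover have "real (?L * (diam V E + 2)) \<le> 3 / ln 2 * real (diam V E) * ln (real (card V))"
    using mult_le_ln_bound two_power_card_LD_ancestors[OF v] diam_pos by blast
  ultimately show "real (card ?pairs) \<le> 3 / ln 2 * real (diam V E) * ln (real (card V))"
    by (meson of_nat_le_iff order.trans)
qed

end
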